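(* Let $\kappa\ge 1$ and $\tau\ge 0$ be integers such that $\chi(J)\le\tau$ for every digraph $J$ with $\omega(J)<\kappa$ having no disoriented long hole. Let $G$ be a digraph with $\omega(G)\le\kappa$ having no disoriented long hole. Then for every vertex $z$ of $G$ and every integer $r\ge1$, $\chi(N^r(z))\le 3\tau\,\chi(N^{r-1}(z))$. Consequently $\chi(N^r(z))\le\tau(3\tau)^{r-1}$ for all $r\ge 1$, and $\chi(N^s(z))\le(3\tau)^{s-r}\chi(N^r(z))$ for all $s\ge r\ge 1$.
   Context: Digraphs are finite, with no loops, parallel edges or antiparallel pairs; $G^*$ denotes the underlying undirected graph and $\chi,\omega$ refer to $G^*$; for $X\subseteq V(G)$, $\chi(X)=\chi(G[X])$. $N^r(z)$ is the set of vertices at distance exactly $r$ from $z$ in $G^*$. A hole of a digraph $G$ is an induced subdigraph $C$ such that $C^*$ is an induced cycle of $G^*$ of length at least four; it is long if its length is at least five. A hole $C$ is directed if every vertex has outdegree exactly one in $C$; alternating if every vertex has outdegree two or zero in $C$; and disoriented if it is neither directed nor alternating. *)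

theory Defs
  imports Main
begin

definition digraph :: "'a set \<Rightarrow> ('a \<times> 'a) set \<Rightarrow> bool" where
  "digraph V A \<longleftrightarrow> finite V \<and> A \<subseteq> V \<times> V \<and> (\<forall>v. (v, v) \<notin> A)
     \<and> (\<forall>u v. (u, v) \<in> A \<longrightarrow> (v, u) \<notin> A)"

definition adj :: "('a \<times> 'a) set \<Rightarrow> 'a \<Rightarrow> 'a \<Rightarrow> bool" where
  "adj A u v \<longleftrightarrow> (u, v) \<in> A \<or> (v, u) \<in> A"

definition chi :: "('a \<times> 'a) set \<Rightarrow> 'a set \<Rightarrow> nat" where
  "chi A X = (LEAST k. \<exists>f :: 'a \<Rightarrow> nat. (\<forall>x\<in>X. f x < k)
       \<and> (\<forall>u\<in>X. \<forall>v\<in>X. adj A u v \<longrightarrow> f u \<noteq> f v))"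

definition clique_num :: "'a set \<Rightarrow> ('a \<times> 'a) set \<Rightarrow> nat" where
  "clique_num V A = Max {card K | K. K \<subseteq> V \<and> (\<forall>u\<in>K. \<forall>v\<in>K. u \<noteq> v \<longrightarrow> adj A u v)}"

definition is_hole :: "'a set \<Rightarrow> ('a \<times> 'a) set \<Rightarrow> 'a list \<Rightarrow> bool" where
  "is_hole V A vs \<longleftrightarrow> length vs \<ge> 4 \<and> distinct vs \<and> set vs \<subseteq> V \<and>
     (\<forall>i < length vs. \<forall>j < length vs.
        adj A (vs ! i) (vs ! j) \<longleftrightarrow> (j = Suc i mod length vs \<or> i = Suc j mod length vs))"

definition long_hole :: "'a set \<Rightarrow> ('a \<times> 'a) set \<Rightarrow> 'a list \<Rightarrow> bool" where
  "long_hole V A vs \<longleftrightarrow> is_hole V A vs \<and> length vs \<ge> 5"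

definition outdeg_in :: "('a \<times> 'a) set \<Rightarrow> 'a list \<Rightarrow> 'a \<Rightarrow> nat" where
  "outdeg_in A vs v = card {w \<in> set vs. (v, w) \<in> A}"

definition directed_hole :: "('a \<times> 'a) set \<Rightarrow> 'a list \<Rightarrow> bool" where
  "directed_hole A vs \<longleftrightarrow> (\<forall>v \<in> set vs. outdeg_in A vs v = 1)"

definition alternating_hole :: "('a \<times> 'a) set \<Rightarrow> 'a list \<Rightarrow> bool" where
  "alternating_hole A vs \<longleftrightarrow> (\<forall>v \<in> set vs. outdeg_in A vs v = 2 \<or> outdeg_in A vs v = 0)"

definition disoriented_hole :: "('a \<times> 'a) set \<Rightarrow> 'a list \<Rightarrow> bool" where
  "disoriented_hole A vs \<longleftrightarrow> \<not> directed_hole A vs \<and> \<not> alternating_hole A vs"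

definition no_disoriented_long_hole :: "'a set \<Rightarrow> ('a \<times> 'a) set \<Rightarrow> bool" where
  "no_disoriented_long_hole V A \<longleftrightarrow> (\<forall>vs. long_hole V A vs \<longrightarrow> \<not> disoriented_hole A vs)"

definition walk_len :: "'a set \<Rightarrow> ('a \<times> 'a) set \<Rightarrow> 'a \<Rightarrow> 'a \<Rightarrow> nat \<Rightarrow> bool" where
  "walk_len V A u v k \<longleftrightarrow> (\<exists>ps. length ps = Suc k \<and> hd ps = u \<and> last ps = v \<and> set ps \<subseteq> V
      \<and> (\<forall>i < k. adj A (ps ! i) (ps ! Suc i)))"

definition Nr :: "'a set \<Rightarrow> ('a \<times> 'a) set \<Rightarrow> nat \<Rightarrow> 'a \<Rightarrow> 'a set" where
  "Nr V A r z = {v \<in> V. walk_len V A z v r \<and> (\<forall>k < r. \<not> walk_len V A z v k)}"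

end

theory Submission
  imports Defs
begin

text \<open>For v in N^(q+1) let p(v) be its neighbour in N^q of least rank (for a fixed injective
  ranking of the vertices), and split N^(q+1) into 2 chi(N^q) classes according to the colour of
  p(v) in an optimal colouring of N^q and the direction of the arc between p(v) and v. Let K be a
  clique inside one class and v0 the member of K whose parent y = p(v0) has the largest rank. For
  another w in K with parent x different from y, x and y are non-adjacent (same colour) and x is
  non-adjacent to v0 (y has least rank among the neighbours of v0). If y were non-adjacent to w,
  a shortest x-y path through the levels below q would close up through w and v0 to a long hole
  in which w and v0 have odd total outdegree, so the hole would be disoriented. Hence y is
  adjacent to all of K, every class has clique number below kappa and chromatic number at most
  tau, and chi(N^(q+1)) <= 2 tau chi(N^q). Similarly z is adjacent to all of N^1, so
  chi(N^1) <= tau, and iterating gives the other two bounds.\<close>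

lemma adj_commute: "adj A u v \<longleftrightarrow> adj A v u"
  by (auto simp: adj_def)

lemma digraph_not_adj_self: "digraph V A \<Longrightarrow> \<not> adj A u u"
  unfolding digraph_def adj_def by blast

lemma digraph_arc_iff_not_reverse:
  "digraph V A \<Longrightarrow> adj A u v \<Longrightarrow> (u, v) \<in> A \<longleftrightarrow> (v, u) \<notin> A"
  unfolding digraph_def adj_def by blast

definition walk_in :: "('a \<times> 'a) set \<Rightarrow> 'a set \<Rightarrow> 'a list \<Rightarrow> bool" where
  "walk_in A L ps \<longleftrightarrow> ps \<noteq> [] \<and> set ps \<subseteq> L \<and> successively (adj A) ps"

lemma walk_len_iff_walk_in:
  "walk_len V A u v k \<longleftrightarrow> (\<exists>ps. walk_in A V ps \<and> length ps = Suc k \<and> hd ps = u \<and> last ps = v)"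
  unfolding walk_len_def walk_in_def successively_conv_nth
  by (intro ex_cong1) auto

lemma walk_in_snoc:
  "walk_in A L ps \<Longrightarrow> adj A (last ps) v \<Longrightarrow> v \<in> L \<Longrightarrow> walk_in A L (ps @ [v])"
  by (auto simp: walk_in_def successively_append_iff)

lemma walk_in_mono: "walk_in A L ps \<Longrightarrow> L \<subseteq> L' \<Longrightarrow> walk_in A L' ps"
  by (auto simp: walk_in_def)

lemma walk_in_rev [simp]: "walk_in A L (rev ps) \<longleftrightarrow> walk_in A L ps"
proof -
  have "successively (\<lambda>x y. adj A y x) ps \<longleftrightarrow> successively (adj A) ps"
    by (rule successively_cong) (auto simp: adj_def)
  then show ?thesis
    unfolding walk_in_def by simp
qed

lemma walk_in_append:
  "walk_in A L xs \<Longrightarrow> walk_in A L ys \<Longrightarrow> adj A (last xs) (hd ys) \<Longrightarrow> walk_in A L (xs @ ys)"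
  by (auto simp: walk_in_def successively_append_iff)

lemma walk_len_Suc_iff:
  "walk_len V A u v (Suc k) \<longleftrightarrow> (\<exists>x. walk_len V A u x k \<and> adj A x v \<and> v \<in> V)"
proof
  assume "walk_len V A u v (Suc k)"
  then obtain ps where ps: "walk_in A V ps" "length ps = Suc (Suc k)" "hd ps = u" "last ps = v"
    by (auto simp: walk_len_iff_walk_in)
  then obtain qs where qs: "ps = qs @ [v]"
    by (metis append_butlast_last_id list.size(3) nat.distinct(1))
  then have "walk_in A V qs" "adj A (last qs) v" "v \<in> V" "qs \<noteq> []"
    using ps by (auto simp: walk_in_def successively_append_iff)
  then show "\<exists>x. walk_len V A u x k \<and> adj A x v \<and> v \<in> V"
    using ps qs unfolding walk_len_iff_walk_in by (intro exI[of _ "last qs"]) auto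
next
  assume "\<exists>x. walk_len V A u x k \<and> adj A x v \<and> v \<in> V"
  then show "walk_len V A u v (Suc k)"
    unfolding walk_len_iff_walk_in
    by (metis walk_in_snoc walk_in_def hd_append2 last_snoc length_append_singleton)
qed

lemma walk_len_0_iff: "walk_len V A u v 0 \<longleftrightarrow> u = v \<and> u \<in> V"
  unfolding walk_len_iff_walk_in walk_in_def
  by (auto simp: length_Suc_conv) (rule exI[of _ "[v]"], simp)

lemma Nr_subset: "Nr V A r z \<subseteq> V"
  unfolding Nr_def by blast

lemma Nr_0: "z \<in> V \<Longrightarrow> Nr V A 0 z = {z}"
  unfolding Nr_def walk_len_0_iff by auto

lemma Nr_unique:
  assumes "v \<in> Nr V A a z" "v \<in> Nr V A b z"
  shows "a = b"
proof -
  have "\<not> a < b" "\<not> b < a"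
    using assms unfolding Nr_def by blast+
  then show ?thesis
    by simp
qed

lemma Nr_adj_le:
  assumes "u \<in> Nr V A a z" "v \<in> Nr V A b z" "adj A u v"
  shows "b \<le> Suc a"
proof (rule ccontr)
  assume "\<not> b \<le> Suc a"
  have "walk_len V A z v (Suc a)"
    using assms unfolding Nr_def walk_len_Suc_iff by blast
  then show False
    using assms(2) \<open>\<not> b \<le> Suc a\<close> unfolding Nr_def by auto
qed

lemma not_adj_lower_level:
  "u \<in> Nr V A j z \<Longrightarrow> j < q \<Longrightarrow> v \<in> Nr V A (Suc q) z \<Longrightarrow> \<not> adj A u v"
  using Nr_adj_le by fastforce

lemma Nr_Suc_parent:
  assumes "v \<in> Nr V A (Suc k) z"
  obtains x where "x \<in> Nr V A k z" "adj A x v"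
proof -
  obtain x where x: "walk_len V A z x k" "adj A x v"
    using assms unfolding Nr_def walk_len_Suc_iff by blast
  have "\<not> walk_len V A z x j" if "j < k" for j
  proof
    assume "walk_len V A z x j"
    then have "walk_len V A z v (Suc j)"
      using x(2) assms unfolding Nr_def walk_len_Suc_iff by blast
    then show False
      using assms \<open>j < k\<close> unfolding Nr_def by auto
  qed
  moreover have "x \<in> V"
    using x(1) unfolding walk_len_iff_walk_in walk_in_def by auto
  ultimately show thesis
    using that x unfolding Nr_def by blast
qed

lemma walk_from_root_to_level:
  assumes "z \<in> V" "u \<in> Nr V A k z"
  shows "\<exists>ps. walk_in A (insert u (\<Union>j<k. Nr V A j z)) ps \<and> hd ps = z \<and> last ps = u"
  using assms(2)
proof (induction k arbitrary: u)
  case 0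
  then show ?case
    using Nr_0[OF assms(1)] by (intro exI[of _ "[z]"]) (auto simp: walk_in_def)
next
  case (Suc k)
  obtain x where x: "x \<in> Nr V A k z" "adj A x u"
    using Nr_Suc_parent[OF Suc.prems] .
  obtain ps where ps: "walk_in A (insert x (\<Union>j<k. Nr V A j z)) ps" "hd ps = z" "last ps = x"
    using Suc.IH[OF x(1)] by blast
  have "walk_in A (insert u (\<Union>j<Suc k. Nr V A j z)) ps"
    by (rule walk_in_mono[OF ps(1)]) (use x(1) in \<open>auto simp: lessThan_Suc\<close>)
  then have "walk_in A (insert u (\<Union>j<Suc k. Nr V A j z)) (ps @ [u])"
    using ps(3) x(2) by (intro walk_in_snoc) auto
  then show ?case
    using ps(1,2) unfolding walk_in_def by (intro exI[of _ "ps @ [u]"]) auto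
qed

lemma walk_within_level:
  assumes "z \<in> V" "x \<in> Nr V A q z" "y \<in> Nr V A q z" "x \<noteq> y"
  shows "\<exists>ps. walk_in A ({x, y} \<union> (\<Union>j<q. Nr V A j z)) ps \<and> hd ps = x \<and> last ps = y"
proof -
  let ?L = "{x, y} \<union> (\<Union>j<q. Nr V A j z)"
  have "q \<noteq> 0"
  proof
    assume "q = 0"
    then show False
      using assms Nr_0[OF assms(1), of A] by auto
  qed
  then have "y \<noteq> z"
    using Nr_unique[OF assms(3)] Nr_0[OF assms(1), of A] by force
  obtain p1 where p1: "walk_in A (insert x (\<Union>j<q. Nr V A j z)) p1" "hd p1 = z" "last p1 = x"
    using walk_from_root_to_level[OF assms(1,2)] by blast
  obtain p2 where p2: "walk_in A (insert y (\<Union>j<q. Nr V A j z)) p2" "hd p2 = z" "last p2 = y"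
    using walk_from_root_to_level[OF assms(1,3)] by blast
  then obtain t where t: "p2 = z # t"
    unfolding walk_in_def by (cases p2) auto
  with p2(3) \<open>y \<noteq> z\<close> have "t \<noteq> []"
    by auto
  with p2(1) t have "walk_in A ?L t" "adj A z (hd t)"
    unfolding walk_in_def by (auto simp: successively_Cons)
  moreover have "walk_in A ?L (rev p1)"
    using p1(1) by (auto intro: walk_in_mono)
  moreover have "last (rev p1) = z"
    using p1 unfolding walk_in_def by (simp add: last_rev)
  ultimately have "walk_in A ?L (rev p1 @ t)"
    by (intro walk_in_append) simp_all
  then show ?thesis
    using p1 p2(3) t \<open>t \<noteq> []\<close> unfolding walk_in_def by (intro exI[of _ "rev p1 @ t"]) (auto simp: hd_rev)
qed

definition chordless :: "('a \<times> 'a) set \<Rightarrow> 'a list \<Rightarrow> bool" where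
  "chordless A ps \<longleftrightarrow> distinct ps \<and>
     (\<forall>i j. i < j \<longrightarrow> j < length ps \<longrightarrow> adj A (ps ! i) (ps ! j) \<longrightarrow> j = Suc i)"

lemma walk_in_take_drop:
  assumes "walk_in A L ps" "0 < k" "k \<le> m" "m < length ps" "adj A (ps ! (k - 1)) (ps ! m)"
  shows "walk_in A L (take k ps @ drop m ps)"
proof -
  have "successively (adj A) (take k ps)" "successively (adj A) (drop m ps)"
    using assms(1) unfolding walk_in_def by (metis append_take_drop_id successively_append_iff)+
  moreover have "last (take k ps) = ps ! (k - 1)"
    using assms(2-4) by (subst last_conv_nth) auto
  moreover have "hd (drop m ps) = ps ! m"
    using assms(4) by (simp add: hd_drop_conv_nth)
  ultimately show ?thesis
    using assms set_take_subset[of k ps] set_drop_subset[of m ps]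
    unfolding walk_in_def by (auto simp: successively_append_iff)
qed

lemma walk_in_drop: "walk_in A L ps \<Longrightarrow> m < length ps \<Longrightarrow> walk_in A L (drop m ps)"
  using set_drop_subset[of m ps] unfolding walk_in_def
  by (metis append_take_drop_id successively_append_iff drop_eq_Nil not_le subset_trans)

lemma walk_in_shorten_to_chordless:
  assumes "walk_in A L ps0"
  obtains ps where "walk_in A L ps" "hd ps = hd ps0" "last ps = last ps0" "chordless A ps"
proof -
  let ?P = "\<lambda>ps. walk_in A L ps \<and> hd ps = hd ps0 \<and> last ps = last ps0"
  obtain ps where ps: "?P ps" and min: "\<And>qs. ?P qs \<Longrightarrow> length ps \<le> length qs"
    using ex_has_least_nat[of ?P ps0 length] assms by blast
  have no_shortcut: False
    if "0 < k" "k < m" "m < length ps" "adj A (ps ! (k - 1)) (ps ! m)" for k m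
  proof -
    let ?qs = "take k ps @ drop m ps"
    have "take k ps \<noteq> []"
      using that by (cases ps) auto
    then have "?P ?qs"
      using ps that walk_in_take_drop[of A L ps k m] by auto
    moreover have "length ?qs < length ps"
      using that by simp
    ultimately show False
      using min not_le by blast
  qed
  have no_repeat: False if "i < j" "j < length ps" "ps ! i = ps ! j" for i j
  proof (cases "i = 0")
    case True
    have "?P (drop j ps)"
      using ps that True walk_in_drop[of A L ps j] unfolding walk_in_def
      by (auto simp: hd_drop_conv_nth hd_conv_nth)
    then show False
      using min[of "drop j ps"] that by simp
  next
    case False
    have "adj A (ps ! (i - 1)) (ps ! i)"
      using ps False that successively_nth[of "adj A" ps "i - 1"] unfolding walk_in_def by simp
    then show False
      using no_shortcut[of i j] False that by simp
  qed
  have "distinct ps"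
    unfolding distinct_conv_nth using no_repeat by (metis linorder_neqE_nat)
  moreover have "j = Suc i" if "i < j" "j < length ps" "adj A (ps ! i) (ps ! j)" for i j
    using no_shortcut[of "Suc i" j] that by (cases "j = Suc i") auto
  ultimately show thesis
    using that ps unfolding chordless_def by blast
qed

lemma chordless_walk_adj_iff:
  assumes "walk_in A L ps" "chordless A ps" "\<And>u. \<not> adj A u u" "i < length ps" "j < length ps"
  shows "adj A (ps ! i) (ps ! j) \<longleftrightarrow> j = Suc i \<or> i = Suc j"
proof
  assume "adj A (ps ! i) (ps ! j)"
  moreover have "i \<noteq> j"
    using calculation assms(3) by auto
  ultimately show "j = Suc i \<or> i = Suc j"
    using assms(2,4,5) adj_commute unfolding chordless_def by (metis linorder_neqE_nat)
next
  assume "j = Suc i \<or> i = Suc j"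
  then show "adj A (ps ! i) (ps ! j)"
  proof
    assume "j = Suc i"
    then show ?thesis
      using assms(1,5) successively_nth[of "adj A" ps i] unfolding walk_in_def by simp
  next
    assume "i = Suc j"
    then show ?thesis
      using assms(1,4) successively_nth[of "adj A" ps j] unfolding walk_in_def
      by (simp add: adj_commute[of A "ps ! Suc j"])
  qed
qed

lemma adj_append_two_iff_cyclic:
  fixes ps :: "'a list"
  defines "n \<equiv> length ps"
  assumes loopfree: "\<And>u. \<not> adj A u u" and "n \<ge> 3" and vw: "adj A v w"
    and adj_ps: "\<And>i j. i < n \<Longrightarrow> j < n \<Longrightarrow> adj A (ps ! i) (ps ! j) \<longleftrightarrow> j = Suc i \<or> i = Suc j"
    and adj_v: "\<And>i. i < n \<Longrightarrow> adj A (ps ! i) v \<longleftrightarrow> i = 0"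
    and adj_w: "\<And>i. i < n \<Longrightarrow> adj A (ps ! i) w \<longleftrightarrow> i = n - 1"
    and "i < n + 2" "j < n + 2"
  shows "adj A ((ps @ [w, v]) ! i) ((ps @ [w, v]) ! j) \<longleftrightarrow>
           j = Suc i mod (n + 2) \<or> i = Suc j mod (n + 2)"
proof -
  let ?vs = "ps @ [w, v]"
  have nth_vs: "?vs ! k = (if k < n then ps ! k else if k = n then w else v)" if "k < n + 2" for k
    using that unfolding n_def by (auto simp: nth_append less_Suc_eq)
  have suc_mod: "Suc k mod (n + 2) = (if k = Suc n then 0 else Suc k)" if "k < n + 2" for k
    using that by auto
  have ordered: "adj A (?vs ! i) (?vs ! j) \<longleftrightarrow> j = Suc i mod (n + 2) \<or> i = Suc j mod (n + 2)"
    if "i \<le> j" "j < n + 2" for i j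
  proof -
    have "j < n \<or> i < n \<and> j = n \<or> i < n \<and> j = Suc n \<or> i = n \<and> j = n
      \<or> i = n \<and> j = Suc n \<or> i = Suc n \<and> j = Suc n"
      using that by linarith
    then consider "j < n" | "i < n" "j = n" | "i < n" "j = Suc n" | "i = n" "j = n"
      | "i = n" "j = Suc n" | "i = Suc n" "j = Suc n"
      by blast
    then show ?thesis
    proof cases
      case 1
      then show ?thesis using that adj_ps by (simp add: nth_vs suc_mod)
    next
      case 2
      then show ?thesis using \<open>n \<ge> 3\<close> adj_w by (simp add: nth_vs suc_mod) linarith
    next
      case 3
      then show ?thesis using adj_v by (simp add: nth_vs suc_mod adj_commute[of A v])
    next
      case 4
      then show ?thesis using loopfree by (simp add: nth_vs suc_mod)
    next
      case 5
      then show ?thesis using vw by (simp add: nth_vs suc_mod adj_commute[of A v])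
    next
      case 6
      then show ?thesis using loopfree by (simp add: nth_vs suc_mod)
    qed
  qed
  show ?thesis
  proof (cases "i \<le> j")
    case True
    then show ?thesis
      using ordered \<open>j < n + 2\<close> by blast
  next
    case False
    then show ?thesis
      using ordered[of j i] \<open>i < n + 2\<close> by (auto simp: adj_commute[of A "?vs ! i"])
  qed
qed

lemma chordless_walk_closes_to_long_hole:
  assumes loopfree: "\<And>u. \<not> adj A u u"
    and ps: "walk_in A V ps" "chordless A ps" "length ps \<ge> 3"
    and vw: "v \<in> V" "w \<in> V" "adj A v w" "v \<notin> set ps" "w \<notin> set ps"
    and nbr_v: "\<forall>u\<in>set ps. adj A u v \<longleftrightarrow> u = hd ps"
    and nbr_w: "\<forall>u\<in>set ps. adj A u w \<longleftrightarrow> u = last ps"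
  shows "long_hole V A (ps @ [w, v])"
proof -
  let ?vs = "ps @ [w, v]"
  have ps_ne: "ps \<noteq> []"
    using ps(1) unfolding walk_in_def by blast
  have dist: "distinct ps"
    using ps(2) unfolding chordless_def by blast
  have adj_v: "adj A (ps ! i) v \<longleftrightarrow> i = 0" if "i < length ps" for i
  proof -
    have "adj A (ps ! i) v \<longleftrightarrow> ps ! i = ps ! 0"
      using nbr_v that ps_ne by (simp add: hd_conv_nth)
    also have "\<dots> \<longleftrightarrow> i = 0"
      using nth_eq_iff_index_eq[OF dist] that ps_ne by blast
    finally show ?thesis .
  qed
  have adj_w: "adj A (ps ! i) w \<longleftrightarrow> i = length ps - 1" if "i < length ps" for i
  proof -
    have "adj A (ps ! i) w \<longleftrightarrow> ps ! i = ps ! (length ps - 1)"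
      using nbr_w that ps_ne by (simp add: last_conv_nth)
    also have "\<dots> \<longleftrightarrow> i = length ps - 1"
      using nth_eq_iff_index_eq[OF dist] that by simp
    finally show ?thesis .
  qed
  have "adj A (?vs ! i) (?vs ! j) \<longleftrightarrow> j = Suc i mod length ?vs \<or> i = Suc j mod length ?vs"
    if "i < length ?vs" "j < length ?vs" for i j
    using adj_append_two_iff_cyclic[OF loopfree ps(3) vw(3) chordless_walk_adj_iff[OF ps(1,2) loopfree]
        adj_v adj_w] that by simp
  moreover have "v \<noteq> w"
    using vw(3) loopfree by blast
  then have "distinct ?vs"
    using dist vw(4,5) by simp
  moreover have "set ?vs \<subseteq> V"
    using ps(1) vw(1,2) unfolding walk_in_def by simp
  ultimately show ?thesis
    using ps(3) unfolding long_hole_def is_hole_def by auto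
qed

lemma odd_outdeg_sum_imp_disoriented:
  assumes "u \<in> set vs" "v \<in> set vs" "odd (outdeg_in A vs u + outdeg_in A vs v)"
  shows "disoriented_hole A vs"
  unfolding disoriented_hole_def directed_hole_def alternating_hole_def
proof (intro conjI notI)
  assume "\<forall>v\<in>set vs. outdeg_in A vs v = 1"
  then show False
    using assms by auto
next
  assume "\<forall>v\<in>set vs. outdeg_in A vs v = 2 \<or> outdeg_in A vs v = 0"
  then have "even (outdeg_in A vs u)" "even (outdeg_in A vs v)"
    using assms(1,2) by fastforce+
  then show False
    using assms(3) by simp
qed

lemma outdeg_in_two_neighbours:
  assumes "a \<noteq> b" "a \<in> set vs" "b \<in> set vs" "\<forall>u\<in>set vs. adj A v u \<longleftrightarrow> u = a \<or> u = b"
  shows "outdeg_in A vs v = of_bool ((v, a) \<in> A) + of_bool ((v, b) \<in> A)"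
proof -
  have "{u \<in> set vs. (v, u) \<in> A} = {u \<in> {a, b}. (v, u) \<in> A}"
    using assms(2-4) unfolding adj_def by blast
  also have "\<dots> = (if (v, a) \<in> A then {a} else {}) \<union> (if (v, b) \<in> A then {b} else {})"
    by auto
  finally show ?thesis
    unfolding outdeg_in_def using assms(1) by (simp add: card_Un_disjoint)
qed

lemma closing_arcs_same_orientation_disoriented:
  assumes dg: "digraph V A" and "x \<in> set ps" "y \<in> set ps" "v \<notin> set ps" "w \<notin> set ps"
    and vw: "adj A v w"
    and nbr_v: "\<forall>u\<in>set ps. adj A u v \<longleftrightarrow> u = x"
    and nbr_w: "\<forall>u\<in>set ps. adj A u w \<longleftrightarrow> u = y"
    and same: "(x, v) \<in> A \<longleftrightarrow> (y, w) \<in> A"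
  shows "disoriented_hole A (ps @ [w, v])"
proof -
  let ?vs = "ps @ [w, v]"
  have loopfree: "\<And>u. \<not> adj A u u"
    using digraph_not_adj_self[OF dg] .
  have "x \<noteq> w" "y \<noteq> v" "adj A x v" "adj A y w"
    using assms(2-5) nbr_v nbr_w by blast+
  have "\<forall>u\<in>set ?vs. adj A v u \<longleftrightarrow> u = x \<or> u = w"
    using nbr_v loopfree vw assms(2,4,5) by (auto simp: adj_commute[of A v])
  then have "outdeg_in A ?vs v = of_bool ((v, x) \<in> A) + of_bool ((v, w) \<in> A)"
    using outdeg_in_two_neighbours[of x w ?vs A v] assms(2) \<open>x \<noteq> w\<close> by simp
  moreover have "\<forall>u\<in>set ?vs. adj A w u \<longleftrightarrow> u = y \<or> u = v"
    using nbr_w loopfree vw assms(3-5) by (auto simp: adj_commute[of A w])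
  then have "outdeg_in A ?vs w = of_bool ((w, y) \<in> A) + of_bool ((w, v) \<in> A)"
    using outdeg_in_two_neighbours[of y v ?vs A w] assms(3) \<open>y \<noteq> v\<close> by simp
  moreover have "(v, x) \<in> A \<longleftrightarrow> (x, v) \<notin> A" "(w, y) \<in> A \<longleftrightarrow> (y, w) \<notin> A"
    "(w, v) \<in> A \<longleftrightarrow> (v, w) \<notin> A"
    using digraph_arc_iff_not_reverse[OF dg] \<open>adj A x v\<close> \<open>adj A y w\<close> vw adj_commute by metis+
  \<comment> \<open>the outdegrees of v and w add up to 3 - 2 [x \<rightarrow> v], an odd number\<close>
  ultimately have "odd (outdeg_in A ?vs v + outdeg_in A ?vs w)"
    using same by auto
  then show ?thesis
    by (rule odd_outdeg_sum_imp_disoriented[rotated 2]) simp_all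
qed

lemma walk_in_length_ge_3:
  assumes "walk_in A L ps" "hd ps \<noteq> last ps" "\<not> adj A (hd ps) (last ps)"
  shows "length ps \<ge> 3"
proof -
  have "ps \<noteq> []"
    using assms(1) unfolding walk_in_def by blast
  then have "length ps \<noteq> 1"
    using assms(2) by (auto simp: length_Suc_conv)
  moreover have "length ps \<noteq> 2"
  proof
    assume "length ps = 2"
    then have "adj A (ps ! 0) (ps ! 1)" "hd ps = ps ! 0" "last ps = ps ! 1"
      using assms(1) successively_nth[of "adj A" ps 0] unfolding walk_in_def
      by (auto simp: hd_conv_nth last_conv_nth)
    then show False
      using assms(3) by simp
  qed
  ultimately show ?thesis
    using \<open>ps \<noteq> []\<close> by (cases "length ps") (auto simp: numeral_eq_Suc)
qed

lemma same_orientation_forces_adj: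
  assumes dg: "digraph V A" and nd: "no_disoriented_long_hole V A" and z: "z \<in> V"
    and v: "v \<in> Nr V A (Suc q) z" and w: "w \<in> Nr V A (Suc q) z"
    and x: "x \<in> Nr V A q z" and y: "y \<in> Nr V A q z" and "x \<noteq> y" "\<not> adj A x y"
    and xv: "adj A x v" and yw: "adj A y w" and "\<not> adj A x w" and vw: "adj A v w"
    and same: "(x, v) \<in> A \<longleftrightarrow> (y, w) \<in> A"
  shows "adj A y v"
proof (rule ccontr)
  assume "\<not> adj A y v"
  let ?L = "{x, y} \<union> (\<Union>j<q. Nr V A j z)"
  obtain ps0 where "walk_in A ?L ps0" "hd ps0 = x" "last ps0 = y"
    using walk_within_level[OF z x y \<open>x \<noteq> y\<close>] by blast
  then obtain ps where ps: "walk_in A ?L ps" "hd ps = x" "last ps = y" "chordless A ps"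
    by (metis walk_in_shorten_to_chordless)
  have "?L \<subseteq> V"
    using x y Nr_subset[of V A _ z] by blast
  then have walk: "walk_in A V ps"
    using ps(1) by (rule walk_in_mono[rotated])
  have above_L: "u \<notin> ?L" if "u \<in> Nr V A (Suc q) z" for u
    using that x y Nr_unique[OF that] by fastforce
  have nbr_v: "\<forall>u\<in>set ps. adj A u v \<longleftrightarrow> u = x"
    using ps(1) xv \<open>\<not> adj A y v\<close> not_adj_lower_level[OF _ _ v] unfolding walk_in_def by blast
  have nbr_w: "\<forall>u\<in>set ps. adj A u w \<longleftrightarrow> u = y"
    using ps(1) yw \<open>\<not> adj A x w\<close> not_adj_lower_level[OF _ _ w] unfolding walk_in_def by blast
  have "v \<notin> set ps" "w \<notin> set ps"
    using ps(1) above_L[OF v] above_L[OF w] unfolding walk_in_def by blast+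
  moreover have "x \<in> set ps" "y \<in> set ps"
    using ps(1-3) unfolding walk_in_def by auto
  moreover have "length ps \<ge> 3"
    using walk_in_length_ge_3[OF ps(1)] ps(2,3) \<open>x \<noteq> y\<close> \<open>\<not> adj A x y\<close> by simp
  ultimately have "long_hole V A (ps @ [w, v])" "disoriented_hole A (ps @ [w, v])"
    using chordless_walk_closes_to_long_hole[OF digraph_not_adj_self[OF dg] walk ps(4)]
      closing_arcs_same_orientation_disoriented[OF dg _ _ _ _ vw nbr_v nbr_w same]
      v w Nr_subset[of V A "Suc q" z] vw nbr_v nbr_w ps(2,3) by blast+
  then show False
    using nd unfolding no_disoriented_long_hole_def by blast
qed

definition proper_colouring :: "('a \<times> 'a) set \<Rightarrow> 'a set \<Rightarrow> ('a \<Rightarrow> nat) \<Rightarrow> nat \<Rightarrow> bool" where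
  "proper_colouring A X f k \<longleftrightarrow> (\<forall>x\<in>X. f x < k) \<and> (\<forall>u\<in>X. \<forall>v\<in>X. adj A u v \<longrightarrow> f u \<noteq> f v)"

lemma chi_le_if_colouring: "proper_colouring A X f k \<Longrightarrow> chi A X \<le> k"
  unfolding chi_def proper_colouring_def by (rule Least_le) blast

lemma colouring_chi_exists:
  assumes "finite X" "\<And>u. u \<in> X \<Longrightarrow> \<not> adj A u u"
  obtains f where "proper_colouring A X f (chi A X)"
proof -
  obtain f :: "'a \<Rightarrow> nat" and n where f: "f ` X = {i. i < n}" "inj_on f X"
    using finite_imp_inj_to_nat_seg[OF assms(1)] by blast
  have "proper_colouring A X f n"
    using f assms(2) unfolding proper_colouring_def inj_on_def by blast
  then have "\<exists>k f. proper_colouring A X f k"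
    by blast
  then show thesis
    using that LeastI_ex[of "\<lambda>k. \<exists>f. proper_colouring A X f k"]
    unfolding chi_def proper_colouring_def by blast
qed

definition clique :: "('a \<times> 'a) set \<Rightarrow> 'a set \<Rightarrow> bool" where
  "clique A K \<longleftrightarrow> (\<forall>u\<in>K. \<forall>v\<in>K. u \<noteq> v \<longrightarrow> adj A u v)"

lemma clique_num_eq: "clique_num V A = Max {card K | K. K \<subseteq> V \<and> clique A K}"
  unfolding clique_num_def clique_def ..

lemma finite_clique_cards: "finite V \<Longrightarrow> finite {card K | K. K \<subseteq> V \<and> clique A K}"
  by (rule finite_subset[of _ "{..card V}"]) (auto intro: card_mono)

lemma card_le_clique_num: "finite V \<Longrightarrow> K \<subseteq> V \<Longrightarrow> clique A K \<Longrightarrow> card K \<le> clique_num V A"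
  unfolding clique_num_eq using finite_clique_cards by (blast intro: Max_ge)

lemma clique_num_less:
  assumes "finite V" "\<And>K. K \<subseteq> V \<Longrightarrow> clique A K \<Longrightarrow> card K < k"
  shows "clique_num V A < k"
proof -
  have "clique A {}"
    unfolding clique_def by blast
  then show ?thesis
    unfolding clique_num_eq using assms finite_clique_cards[OF assms(1)]
    by (subst Max_less_iff) blast+
qed

lemma card_clique_with_common_neighbour_less:
  assumes "finite V" "clique_num V A \<le> kappa" "K \<subseteq> V" "clique A K"
    and "y \<in> V" "y \<notin> K" "\<forall>u\<in>K. adj A y u"
  shows "card K < kappa"
proof -
  have "clique A (insert y K)"
    using assms(4,7) adj_commute unfolding clique_def by (metis insert_iff)
  then have "card (insert y K) \<le> kappa"
    using card_le_clique_num[OF assms(1)] assms(2,3,5) by (meson insert_subset order_trans)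
  then show ?thesis
    using assms(1,3,6) finite_subset by fastforce
qed

definition arc_embedding :: "('b \<Rightarrow> 'a) \<Rightarrow> 'b set \<Rightarrow> ('b \<times> 'b) set \<Rightarrow> ('a \<times> 'a) set \<Rightarrow> bool" where
  "arc_embedding h W B A \<longleftrightarrow> inj_on h W \<and> (\<forall>a\<in>W. \<forall>b\<in>W. (h a, h b) \<in> A \<longleftrightarrow> (a, b) \<in> B)"

lemma arc_embedding_adj_iff:
  "arc_embedding h W B A \<Longrightarrow> a \<in> W \<Longrightarrow> b \<in> W \<Longrightarrow> adj A (h a) (h b) \<longleftrightarrow> adj B a b"
  unfolding arc_embedding_def adj_def by blast

lemma arc_embedding_long_hole:
  assumes h: "arc_embedding h W B A" "h ` W \<subseteq> V" and hole: "long_hole W B ws"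
  shows "long_hole V A (map h ws)"
proof -
  have ws: "set ws \<subseteq> W"
    using hole unfolding long_hole_def is_hole_def by blast
  have "adj A (h (ws ! i)) (h (ws ! j)) \<longleftrightarrow> adj B (ws ! i) (ws ! j)"
    if "i < length ws" "j < length ws" for i j
    using arc_embedding_adj_iff[OF h(1)] ws that by (meson nth_mem subsetD)
  moreover have "inj_on h (set ws)"
    using h(1) ws inj_on_subset unfolding arc_embedding_def by blast
  then have "distinct (map h ws)"
    using hole unfolding long_hole_def is_hole_def by (simp add: distinct_map)
  moreover have "set (map h ws) \<subseteq> V"
    using ws h(2) by auto
  ultimately show ?thesis
    using hole unfolding long_hole_def is_hole_def by auto
qed

lemma arc_embedding_outdeg_in:
  assumes h: "arc_embedding h W B A" and ws: "set ws \<subseteq> W" "m \<in> set ws"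
  shows "outdeg_in A (map h ws) (h m) = outdeg_in B ws m"
proof -
  have "{u \<in> set (map h ws). (h m, u) \<in> A} = h ` {u \<in> set ws. (m, u) \<in> B}"
    using h ws unfolding arc_embedding_def by (auto simp: subset_iff)
  moreover have "inj_on h {u \<in> set ws. (m, u) \<in> B}"
    using h ws unfolding arc_embedding_def by (auto intro: inj_on_subset)
  ultimately show ?thesis
    unfolding outdeg_in_def by (simp add: card_image)
qed

lemma arc_embedding_disoriented_hole:
  assumes h: "arc_embedding h W B A" and ws: "set ws \<subseteq> W"
  shows "disoriented_hole A (map h ws) \<longleftrightarrow> disoriented_hole B ws"
  using arc_embedding_outdeg_in[OF h ws]
  unfolding disoriented_hole_def directed_hole_def alternating_hole_def by simp

lemma arc_embedding_no_disoriented_long_hole: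
  assumes h: "arc_embedding h W B A" "h ` W \<subseteq> V" and nd: "no_disoriented_long_hole V A"
  shows "no_disoriented_long_hole W B"
  unfolding no_disoriented_long_hole_def
proof (intro allI impI)
  fix ws
  assume hole: "long_hole W B ws"
  then have "set ws \<subseteq> W"
    unfolding long_hole_def is_hole_def by blast
  then show "\<not> disoriented_hole B ws"
    using nd arc_embedding_long_hole[OF h hole] arc_embedding_disoriented_hole[OF h(1)]
    unfolding no_disoriented_long_hole_def by blast
qed

lemma arc_embedding_clique:
  assumes h: "arc_embedding h W B A" and K: "K \<subseteq> W" "clique B K"
  shows "clique A (h ` K)" "card (h ` K) = card K"
proof -
  show "clique A (h ` K)"
    using K arc_embedding_adj_iff[OF h] unfolding clique_def by (smt (verit) imageE subsetD)
  show "card (h ` K) = card K"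
    using h K(1) unfolding arc_embedding_def by (meson card_image inj_on_subset)
qed

lemma arc_embedding_chi_le:
  assumes h: "arc_embedding h W B A" and "finite W" "\<And>a. \<not> adj B a a"
  shows "chi A (h ` W) \<le> chi B W"
proof -
  obtain c where c: "proper_colouring B W c (chi B W)"
    using colouring_chi_exists assms(2,3) by metis
  have "proper_colouring A (h ` W) (c \<circ> inv_into W h) (chi B W)"
    unfolding proper_colouring_def
  proof (intro conjI ballI impI)
    fix u
    assume "u \<in> h ` W"
    then show "(c \<circ> inv_into W h) u < chi B W"
      using c inv_into_into[of u h W] unfolding proper_colouring_def by simp
  next
    fix u v
    assume "u \<in> h ` W" "v \<in> h ` W" "adj A u v"
    then obtain a b where ab: "a \<in> W" "b \<in> W" "u = h a" "v = h b"
      by blast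
    then have "adj B a b"
      using arc_embedding_adj_iff[OF h] \<open>adj A u v\<close> by blast
    moreover have "inv_into W h u = a" "inv_into W h v = b"
      using h ab unfolding arc_embedding_def by simp_all
    ultimately show "(c \<circ> inv_into W h) u \<noteq> (c \<circ> inv_into W h) v"
      using c ab(1,2) unfolding proper_colouring_def by simp
  qed
  then show ?thesis
    by (rule chi_le_if_colouring)
qed

lemma nat_arc_embedding_exists:
  assumes "digraph V A" "Z \<subseteq> V"
  obtains W :: "nat set" and B h where "digraph W B" "arc_embedding h W B A" "h ` W = Z"
proof -
  have "finite Z"
    using assms finite_subset unfolding digraph_def by blast
  then obtain h :: "nat \<Rightarrow> 'a" where h: "bij_betw h {0..<card Z} Z"
    using ex_bij_betw_nat_finite by blast
  define W where "W = {0..<card Z}"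
  define B where "B = {(a, b). a \<in> W \<and> b \<in> W \<and> (h a, h b) \<in> A}"
  have "arc_embedding h W B A"
    using h unfolding arc_embedding_def B_def W_def bij_betw_def by blast
  moreover have "digraph W B"
    using assms unfolding digraph_def B_def W_def by auto
  ultimately show thesis
    using that h unfolding W_def bij_betw_def by blast
qed

text \<open>The hypothesis on tau of the theorem. It only speaks about digraphs on natural numbers;
  nat_arc_embedding_exists transfers it to finite induced subdigraphs of any digraph.\<close>

definition chi_bounded :: "nat \<Rightarrow> nat \<Rightarrow> bool" where
  "chi_bounded kappa tau \<longleftrightarrow> (\<forall>(W :: nat set) (B :: (nat \<times> nat) set).
     digraph W B \<and> clique_num W B < kappa \<and> no_disoriented_long_hole W B \<longrightarrow> chi B W \<le> tau)"

lemma chi_le_if_cliques_small: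
  assumes bound: "chi_bounded kappa tau"
    and dg: "digraph V A" and nd: "no_disoriented_long_hole V A" and "Z \<subseteq> V"
    and small: "\<And>K. K \<subseteq> Z \<Longrightarrow> clique A K \<Longrightarrow> card K < kappa"
  shows "chi A Z \<le> tau"
proof -
  obtain W :: "nat set" and B h where W: "digraph W B" "arc_embedding h W B A" "h ` W = Z"
    using nat_arc_embedding_exists[OF dg \<open>Z \<subseteq> V\<close>] .
  have "clique_num W B < kappa"
  proof (rule clique_num_less)
    show "finite W"
      using W(1) unfolding digraph_def by blast
    show "card K < kappa" if "K \<subseteq> W" "clique B K" for K
      using small[of "h ` K"] arc_embedding_clique[OF W(2) that] W(3) that(1) by auto
  qed
  moreover have "no_disoriented_long_hole W B"
    using arc_embedding_no_disoriented_long_hole W \<open>Z \<subseteq> V\<close> nd by blast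
  ultimately have "chi B W \<le> tau"
    using bound W(1) unfolding chi_bounded_def by blast
  moreover have "chi A Z \<le> chi B W"
    using arc_embedding_chi_le[OF W(2)] W(1,3) digraph_not_adj_self[OF W(1)]
    unfolding digraph_def by blast
  ultimately show ?thesis
    by simp
qed

lemma chi_le_mult_if_fibres:
  assumes "finite X" "\<And>u. u \<in> X \<Longrightarrow> \<not> adj A u u" "\<And>v. v \<in> X \<Longrightarrow> key v < m"
    and fibre: "\<And>i. i < m \<Longrightarrow> chi A {v \<in> X. key v = i} \<le> tau"
  shows "chi A X \<le> m * tau"
proof -
  have "\<exists>f. proper_colouring A {v \<in> X. key v = i} f tau" if "i < m" for i
  proof -
    obtain f where "proper_colouring A {v \<in> X. key v = i} f (chi A {v \<in> X. key v = i})"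
      using colouring_chi_exists[of "{v \<in> X. key v = i}" A] assms(1,2) by auto
    then show ?thesis
      using fibre[OF that] unfolding proper_colouring_def by (meson order_less_le_trans)
  qed
  then obtain f where f: "\<And>i. i < m \<Longrightarrow> proper_colouring A {v \<in> X. key v = i} (f i) tau"
    by metis
  define col where "col v = key v * tau + f (key v) v" for v
  have f_less: "f (key v) v < tau" if "v \<in> X" for v
    using f[OF assms(3)[OF that]] that unfolding proper_colouring_def by blast
  have "proper_colouring A X col (m * tau)"
    unfolding proper_colouring_def
  proof (intro conjI ballI impI)
    fix v
    assume "v \<in> X"
    have "col v < Suc (key v) * tau"
      using f_less[OF \<open>v \<in> X\<close>] unfolding col_def by simp
    also have "\<dots> \<le> m * tau"
      using assms(3)[OF \<open>v \<in> X\<close>] by (intro mult_right_mono) simp_all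
    finally show "col v < m * tau" .
  next
    fix u v
    assume uv: "u \<in> X" "v \<in> X" "adj A u v"
    show "col u \<noteq> col v"
    proof (cases "key u = key v")
      case True
      then show ?thesis
        using f[OF assms(3)[OF uv(1)]] uv unfolding proper_colouring_def col_def by auto
    next
      case False
      have "col u div tau = key u" "col v div tau = key v"
        using f_less[OF uv(1)] f_less[OF uv(2)] unfolding col_def by simp_all
      then show ?thesis
        using False by metis
    qed
  qed
  then show ?thesis
    by (rule chi_le_if_colouring)
qed

lemma ex_rank_minimal_parent:
  fixes rho :: "'a \<Rightarrow> 'b::linorder"
  assumes "finite V"
  obtains par where "\<And>v. v \<in> Nr V A (Suc q) z \<Longrightarrow> par v \<in> Nr V A q z \<and> adj A (par v) v
      \<and> (\<forall>x\<in>Nr V A q z. adj A x v \<longrightarrow> rho (par v) \<le> rho x)"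
proof
  fix v
  let ?S = "{x \<in> Nr V A q z. adj A x v}"
  assume "v \<in> Nr V A (Suc q) z"
  then obtain x where "x \<in> Nr V A q z" "adj A x v"
    by (rule Nr_Suc_parent)
  then have ne: "?S \<noteq> {}"
    by blast
  have fin: "finite ?S"
    using finite_subset[OF Nr_subset assms] by simp
  have "arg_min_on rho ?S \<in> ?S"
    by (rule arg_min_if_finite(1)[OF fin ne])
  moreover have "rho (arg_min_on rho ?S) \<le> rho x" if "x \<in> Nr V A q z" "adj A x v" for x
    using arg_min_least[OF fin ne] that by blast
  ultimately show "arg_min_on rho ?S \<in> Nr V A q z \<and> adj A (arg_min_on rho ?S) v
      \<and> (\<forall>x\<in>Nr V A q z. adj A x v \<longrightarrow> rho (arg_min_on rho ?S) \<le> rho x)"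
    by blast
qed

lemma clique_of_parent_class_has_common_neighbour:
  fixes rho :: "'a \<Rightarrow> 'b::linorder"
  assumes dg: "digraph V A" and nd: "no_disoriented_long_hole V A" and z: "z \<in> V"
    and col: "proper_colouring A (Nr V A q z) phi c" and rank: "inj_on rho V"
    and par: "\<And>v. v \<in> K \<Longrightarrow> par v \<in> Nr V A q z \<and> adj A (par v) v
                 \<and> (\<forall>x\<in>Nr V A q z. adj A x v \<longrightarrow> rho (par v) \<le> rho x)"
    and K: "K \<subseteq> Nr V A (Suc q) z" "clique A K" "finite K" "K \<noteq> {}"
    and same_class: "\<And>v w. v \<in> K \<Longrightarrow> w \<in> K \<Longrightarrow>
                       phi (par v) = phi (par w) \<and> ((par v, v) \<in> A \<longleftrightarrow> (par w, w) \<in> A)"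
  shows "\<exists>y\<in>Nr V A q z. \<forall>w\<in>K. adj A y w"
proof -
  have "Max ((\<lambda>v. rho (par v)) ` K) \<in> (\<lambda>v. rho (par v)) ` K"
    using K(3,4) by simp
  then obtain v0 where v0: "v0 \<in> K" "rho (par v0) = Max ((\<lambda>v. rho (par v)) ` K)"
    by (metis (no_types, lifting) imageE)
  have v0_max: "rho (par w) \<le> rho (par v0)" if "w \<in> K" for w
    unfolding v0(2) using K(3) that by simp
  define y where "y = par v0"
  have y: "y \<in> Nr V A q z" "adj A y v0"
    using par[OF v0(1)] unfolding y_def by blast+
  have "adj A y w" if "w \<in> K" "w \<noteq> v0" for w
  proof (cases "par w = y")
    case True
    then show ?thesis
      using par[OF \<open>w \<in> K\<close>] by simp
  next
    case False
    define x where "x = par w"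
    have x: "x \<in> Nr V A q z" "adj A x w"
      using par[OF \<open>w \<in> K\<close>] unfolding x_def by blast+
    have same: "phi x = phi y" "(x, w) \<in> A \<longleftrightarrow> (y, v0) \<in> A"
      using same_class[OF \<open>w \<in> K\<close> v0(1)] unfolding x_def y_def by blast+
    then have "\<not> adj A x y"
      using col x(1) y(1) unfolding proper_colouring_def by blast
    have "x \<in> V" "y \<in> V"
      using x(1) y(1) Nr_subset[of V A q z] by blast+
    then have "rho x \<noteq> rho y"
      using False rank unfolding x_def inj_on_def by blast
    moreover have "rho x \<le> rho y"
      using v0_max[OF \<open>w \<in> K\<close>] unfolding x_def y_def .
    ultimately have "rho x < rho y"
      by simp
    then have "\<not> adj A x v0"
      using par[OF v0(1)] x(1) unfolding y_def by (meson leD)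
    moreover have "adj A w v0"
      using K(2) that v0(1) unfolding clique_def by blast
    moreover have "w \<in> Nr V A (Suc q) z" "v0 \<in> Nr V A (Suc q) z"
      using K(1) that(1) v0(1) by blast+
    moreover have "x \<noteq> y"
      using False unfolding x_def .
    ultimately show ?thesis
      using same_orientation_forces_adj[OF dg nd z _ _ x(1) y(1) _ \<open>\<not> adj A x y\<close> x(2) y(2)]
        same(2) by blast
  qed
  then show ?thesis
    using y by blast
qed

lemma chi_parent_class_le:
  fixes rho :: "'a \<Rightarrow> 'b::linorder"
  assumes bound: "chi_bounded kappa tau" and dg: "digraph V A" and cn: "clique_num V A \<le> kappa"
    and nd: "no_disoriented_long_hole V A" and z: "z \<in> V"
    and col: "proper_colouring A (Nr V A q z) phi c" and rank: "inj_on rho V"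
    and X: "X \<subseteq> Nr V A (Suc q) z"
    and par: "\<And>v. v \<in> X \<Longrightarrow> par v \<in> Nr V A q z \<and> adj A (par v) v
                 \<and> (\<forall>x\<in>Nr V A q z. adj A x v \<longrightarrow> rho (par v) \<le> rho x)"
    and same_class: "\<And>v w. v \<in> X \<Longrightarrow> w \<in> X \<Longrightarrow>
                       phi (par v) = phi (par w) \<and> ((par v, v) \<in> A \<longleftrightarrow> (par w, w) \<in> A)"
  shows "chi A X \<le> tau"
proof (rule chi_le_if_cliques_small[OF bound dg nd])
  have finV: "finite V"
    using dg unfolding digraph_def by blast
  show "X \<subseteq> V"
    using X Nr_subset[of V A "Suc q" z] by blast
  fix K
  assume K: "K \<subseteq> X" "clique A K"
  have "K \<subseteq> V"
    using K(1) \<open>X \<subseteq> V\<close> by blast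
  show "card K < kappa"
  proof (cases "K = {}")
    case True
    have "clique A {z}"
      unfolding clique_def by blast
    then show ?thesis
      using card_le_clique_num[OF finV, of "{z}" A] z cn True by simp
  next
    case False
    have "finite K"
      using \<open>K \<subseteq> V\<close> finV finite_subset by blast
    have "K \<subseteq> Nr V A (Suc q) z"
      using K(1) X by blast
    have par_K: "par v \<in> Nr V A q z \<and> adj A (par v) v
        \<and> (\<forall>x\<in>Nr V A q z. adj A x v \<longrightarrow> rho (par v) \<le> rho x)" if "v \<in> K" for v
      using par K(1) that by blast
    have class_K: "phi (par v) = phi (par w) \<and> ((par v, v) \<in> A \<longleftrightarrow> (par w, w) \<in> A)"
      if "v \<in> K" "w \<in> K" for v w
      using same_class K(1) that by blast
    obtain y where y: "y \<in> Nr V A q z" "\<forall>w\<in>K. adj A y w"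
      using clique_of_parent_class_has_common_neighbour[OF dg nd z col rank par_K
          \<open>K \<subseteq> Nr V A (Suc q) z\<close> K(2) \<open>finite K\<close> False class_K] by blast
    have "y \<notin> K"
      using y(1) \<open>K \<subseteq> Nr V A (Suc q) z\<close> Nr_unique[of y V A q z "Suc q"] by auto
    moreover have "y \<in> V"
      using y(1) Nr_subset[of V A q z] by blast
    ultimately show ?thesis
      using card_clique_with_common_neighbour_less[OF finV cn \<open>K \<subseteq> V\<close> K(2) _ _ y(2)] by blast
  qed
qed

lemma chi_next_level_le:
  assumes bound: "chi_bounded kappa tau" and dg: "digraph V A" and cn: "clique_num V A \<le> kappa"
    and nd: "no_disoriented_long_hole V A" and z: "z \<in> V"
  shows "chi A (Nr V A (Suc q) z) \<le> 2 * tau * chi A (Nr V A q z)"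
proof -
  let ?P = "Nr V A q z" and ?C = "Nr V A (Suc q) z"
  have finV: "finite V"
    using dg unfolding digraph_def by blast
  have loopfree: "\<And>u. \<not> adj A u u"
    using digraph_not_adj_self[OF dg] .
  have finP: "finite ?P" and finC: "finite ?C"
    using finite_subset[OF Nr_subset finV] by blast+
  obtain phi where phi: "proper_colouring A ?P phi (chi A ?P)"
    using colouring_chi_exists[OF finP] loopfree by metis
  obtain rho :: "'a \<Rightarrow> nat" where rho: "inj_on rho V"
    using finite_imp_inj_to_nat_seg[OF finV] by metis
  obtain par where par: "\<And>v. v \<in> ?C \<Longrightarrow> par v \<in> ?P \<and> adj A (par v) v
      \<and> (\<forall>x\<in>?P. adj A x v \<longrightarrow> rho (par v) \<le> rho x)"
    using ex_rank_minimal_parent[OF finV, of A q z rho] by blast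
  define key where "key v = 2 * phi (par v) + of_bool ((par v, v) \<in> A)" for v
  have key_less: "key v < 2 * chi A ?P" if "v \<in> ?C" for v
  proof -
    have "phi (par v) < chi A ?P"
      using phi par[OF that] unfolding proper_colouring_def by blast
    then show ?thesis
      unfolding key_def by simp
  qed
  have key_eq: "phi (par v) = phi (par w) \<and> ((par v, v) \<in> A \<longleftrightarrow> (par w, w) \<in> A)"
    if "key v = key w" for v w
  proof -
    have "a = b \<and> (P \<longleftrightarrow> Q)" if "2 * a + of_bool P = 2 * b + of_bool Q" for a b :: nat and P Q
      using that by (cases P; cases Q) (auto dest: arg_cong[where f = even])
    then show ?thesis
      using that unfolding key_def by blast
  qed
  have fibre: "chi A {v \<in> ?C. key v = i} \<le> tau" for i
  proof (rule chi_parent_class_le[OF bound dg cn nd z phi rho, where par = par])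
    show "{v \<in> ?C. key v = i} \<subseteq> ?C"
      by blast
    show "par v \<in> ?P \<and> adj A (par v) v \<and> (\<forall>x\<in>?P. adj A x v \<longrightarrow> rho (par v) \<le> rho x)"
      if "v \<in> {v \<in> ?C. key v = i}" for v
      using par that by blast
    show "phi (par v) = phi (par w) \<and> ((par v, v) \<in> A \<longleftrightarrow> (par w, w) \<in> A)"
      if "v \<in> {v \<in> ?C. key v = i}" "w \<in> {v \<in> ?C. key v = i}" for v w
      using key_eq that by simp
  qed
  have "chi A ?C \<le> 2 * chi A ?P * tau"
    using chi_le_mult_if_fibres[of ?C A key "2 * chi A ?P" tau] finC loopfree key_less fibre by blast
  then show ?thesis
    by (simp add: mult_ac)
qed

lemma chi_first_level_le:
  assumes bound: "chi_bounded kappa tau" and dg: "digraph V A" and cn: "clique_num V A \<le> kappa"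
    and nd: "no_disoriented_long_hole V A" and z: "z \<in> V"
  shows "chi A (Nr V A 1 z) \<le> tau"
proof (rule chi_le_if_cliques_small[OF bound dg nd Nr_subset])
  fix K
  assume K: "K \<subseteq> Nr V A 1 z" "clique A K"
  have "adj A z w" if "w \<in> K" for w
  proof -
    have "w \<in> Nr V A (Suc 0) z"
      using K(1) that by auto
    then obtain x where "x \<in> Nr V A 0 z" "adj A x w"
      by (rule Nr_Suc_parent)
    then show ?thesis
      using Nr_0[OF z] by simp
  qed
  moreover have "z \<notin> K"
    using K(1) Nr_unique[of z V A 0 z 1] Nr_0[OF z] by auto
  moreover have "finite V"
    using dg unfolding digraph_def by blast
  moreover have "K \<subseteq> V"
    using K(1) Nr_subset by (rule subset_trans)
  ultimately show "card K < kappa"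
    using card_clique_with_common_neighbour_less[OF _ cn _ K(2) z] by blast
qed

lemma le_pow_mult_if_le_mult:
  fixes a :: "nat \<Rightarrow> nat"
  assumes "\<And>q. a (Suc q) \<le> c * a q"
  shows "a (r + d) \<le> c ^ d * a r"
proof (induction d)
  case 0
  then show ?case
    by simp
next
  case (Suc d)
  have "a (r + Suc d) \<le> c * a (r + d)"
    using assms by simp
  also have "\<dots> \<le> c * (c ^ d * a r)"
    using Suc.IH by (rule mult_left_mono) simp
  finally show ?case
    by (simp add: mult.assoc)
qed

theorem mainTheorem5:
  fixes kappa tau :: nat
    and V :: "'a set" and A :: "('a \<times> 'a) set" and z :: 'a
  assumes "kappa \<ge> 1"
    and "\<forall>(W :: nat set) (B :: (nat \<times> nat) set).
           digraph W B \<and> clique_num W B < kappa \<and> no_disoriented_long_hole W B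
           \<longrightarrow> chi B W \<le> tau"
    and "digraph V A" and "clique_num V A \<le> kappa" and "no_disoriented_long_hole V A"
    and "z \<in> V"
  shows "(\<forall>r \<ge> 1. chi A (Nr V A r z) \<le> 3 * tau * chi A (Nr V A (r - 1) z))
       \<and> (\<forall>r \<ge> 1. chi A (Nr V A r z) \<le> tau * (3 * tau) ^ (r - 1))
       \<and> (\<forall>r s. 1 \<le> r \<longrightarrow> r \<le> s \<longrightarrow> chi A (Nr V A s z) \<le> (3 * tau) ^ (s - r) * chi A (Nr V A r z))"
proof -
  have bound: "chi_bounded kappa tau"
    using assms(2) unfolding chi_bounded_def .
  let ?c = "\<lambda>r. chi A (Nr V A r z)"
  have step: "?c (Suc q) \<le> 3 * tau * ?c q" for q
    using chi_next_level_le[OF bound assms(3-6), of q] by (simp add: le_trans)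
  have iter: "?c (r + d) \<le> (3 * tau) ^ d * ?c r" for r d
    using le_pow_mult_if_le_mult[of ?c, OF step] .
  have "?c (Suc q) \<le> tau * (3 * tau) ^ q" for q
  proof -
    have "?c (Suc q) \<le> (3 * tau) ^ q * ?c 1"
      using iter[of 1 q] by simp
    also have "\<dots> \<le> (3 * tau) ^ q * tau"
      using chi_first_level_le[OF bound assms(3-6)] by (rule mult_left_mono) simp
    finally show ?thesis
      by (simp add: mult.commute)
  qed
  moreover have "?c s \<le> (3 * tau) ^ (s - r) * ?c r" if "r \<le> s" for r s
    using iter[of r "s - r"] that by simp
  ultimately show ?thesis
    using step by (metis Suc_diff_1 less_eq_Suc_le One_nat_def)
qed

end
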